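(* Let $p\ne q$ be primes, $G=\mathbb{Z}_p^2\times\mathbb{Z}_q^2$, and $S\subseteq G$ with $\gcd(|S|,p^2q^2)=pq$ and $|S|\ge pq\min\{p,q\}$. Then $S$ is not spectral.
   Context: For $w=(u,v)\in G$ ($u\in\mathbb{Z}_p^2$, $v\in\mathbb{Z}_q^2$) define $\chi_w(a,b)=\exp\big(2\pi i(\tfrac{u\cdot a}{p}+\tfrac{v\cdot b}{q})\big)$ and $\chi(S)=\sum_{s\in S}\chi(s)$. $S$ is spectral if there is $\Lambda\subseteq G$ with $|\Lambda|=|S|$ and $\chi_{\lambda-\lambda'}(S)=0$ for all distinct $\lambda,\lambda'\in\Lambda$. *)

theory Defs
  imports "HOL-Analysis.Analysis" "HOL-Computational_Algebra.Primes"
begin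

text \<open>Elements of G = Z_p^2 x Z_q^2 are represented as ((a1,a2),(b1,b2)) with
  0 <= a_i < p and 0 <= b_i < q.\<close>

type_synonym elt = "(int \<times> int) \<times> (int \<times> int)"

definition Gset :: "nat \<Rightarrow> nat \<Rightarrow> elt set" where
  "Gset p q = {((a1,a2),(b1,b2)). 0 \<le> a1 \<and> a1 < int p \<and> 0 \<le> a2 \<and> a2 < int p
                \<and> 0 \<le> b1 \<and> b1 < int q \<and> 0 \<le> b2 \<and> b2 < int q}"

definition gsub :: "nat \<Rightarrow> nat \<Rightarrow> elt \<Rightarrow> elt \<Rightarrow> elt" where
  "gsub p q x y = (case x of ((a1,a2),(b1,b2)) \<Rightarrow> case y of ((c1,c2),(d1,d2)) \<Rightarrow>
      (((a1 - c1) mod int p, (a2 - c2) mod int p), ((b1 - d1) mod int q, (b2 - d2) mod int q)))"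

definition chi :: "nat \<Rightarrow> nat \<Rightarrow> elt \<Rightarrow> elt \<Rightarrow> complex" where
  "chi p q w s = (case w of ((u1,u2),(v1,v2)) \<Rightarrow> case s of ((a1,a2),(b1,b2)) \<Rightarrow>
      exp (2 * pi * \<i> * complex_of_real
        (real_of_int (u1*a1 + u2*a2) / real p + real_of_int (v1*b1 + v2*b2) / real q)))"

definition chiS :: "nat \<Rightarrow> nat \<Rightarrow> elt \<Rightarrow> elt set \<Rightarrow> complex" where
  "chiS p q w S = (\<Sum>s\<in>S. chi p q w s)"

definition spectral :: "nat \<Rightarrow> nat \<Rightarrow> elt set \<Rightarrow> bool" where
  "spectral p q S \<longleftrightarrow> (\<exists>\<Lambda>. \<Lambda> \<subseteq> Gset p q \<and> card \<Lambda> = card S \<and>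
      (\<forall>l\<in>\<Lambda>. \<forall>l'\<in>\<Lambda>. l \<noteq> l' \<longrightarrow> chiS p q (gsub p q l l') S = 0))"

end

theory Submission
  imports Defs "HOL-Computational_Algebra.Polynomial"
begin

text \<open>
  Let S be spectral with spectrum \<Lambda>, so that |\<Lambda>| = |S|. If for a direction e of Z_p^2
  the character sum of S at (c e, 0) vanishes for some c \<noteq> 0 (mod p), then the linear form
  a \<mapsto> e \<cdot> a is equidistributed mod p on S: an integer combination
  \<Sum>_{k<p} n_k \<zeta>^k of a primitive p-th root of unity \<zeta> vanishes only if all n_k are equal,
  by the irreducibility of the p-th cyclotomic polynomial (Eisenstein). Double counting the
  points of S on the p + 1 lines through the origin shows that this cannot happen for every
  direction unless p^2 divides |S|. Hence for some direction e no two elements of \<Lambda> differ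
  by a nonzero element of \<langle>e\<rangle> \<times> {0}, so \<Lambda> injects into (Z_p^2 / \<langle>e\<rangle>) \<times> Z_q^2 and
  |S| \<le> p q^2. By symmetry |S| \<le> q p^2; together with |S| \<ge> p q min(p, q) this forces
  |S| \<in> {p^2 q, p q^2}, contradicting gcd(|S|, p^2 q^2) = p q.
\<close>

section \<open>Irreducibility of the cyclotomic polynomial of prime order\<close>

text \<open>For prime n this is the n-th cyclotomic polynomial.\<close>

definition geom_poly :: "nat \<Rightarrow> int poly" where
  "geom_poly n = (\<Sum>k<n. monom 1 k)"

lemma coeff_geom_poly: "coeff (geom_poly n) k = (if k < n then 1 else 0)"
  by (simp add: geom_poly_def coeff_sum coeff_monom)

lemma geom_poly_mult: "[:-1, 1:] * geom_poly n = [:0, 1:] ^ n - 1"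
proof -
  have "[:0, 1::int:] ^ n - 1 ^ n = ([:0, 1:] - 1) * (\<Sum>k<n. 1 ^ (n - Suc k) * [:0, 1:] ^ k)"
    by (rule power_diff_sumr2)
  moreover have "[:0, 1::int:] - 1 = [:-1, 1:]" by (simp add: one_pCons)
  ultimately show ?thesis by (simp add: geom_poly_def monom_altdef)
qed

lemma coeff_geom_poly_shift: "coeff (pcompose (geom_poly n) [:1, 1:]) k = int (n choose Suc k)"
proof -
  have "pcompose ([:0, 1:] ^ m) r = r ^ m" for m and r :: "int poly"
    by (induct m) (simp_all add: pcompose_mult pcompose_pCons pcompose_1)
  then have shift: "[:0, 1:] * pcompose (geom_poly n) [:1, 1:] = [:1, 1::int:] ^ n - 1"
    using arg_cong[OF geom_poly_mult, of "\<lambda>P. pcompose P [:1, 1:]"]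
    by (simp add: pcompose_mult pcompose_diff pcompose_1 pcompose_pCons)
  have "coeff (pcompose (geom_poly n) [:1, 1:]) k
      = coeff ([:0, 1:] * pcompose (geom_poly n) [:1, 1:]) (Suc k)"
    by simp
  also have "\<dots> = coeff ([:1, 1::int:] ^ n) (Suc k)"
    unfolding shift by (simp add: coeff_1)
  also have "\<dots> = int (n choose Suc k)"
    by (cases "Suc k \<le> n")
      (simp_all add: coeff_linear_poly_power coeff_eq_0 degree_linear_power binomial_eq_0)
  finally show ?thesis .
qed

lemma degree_geom_poly_shift:
  assumes "n \<ge> 1"
  shows "degree (pcompose (geom_poly n) [:1, 1:]) = n - 1"
proof (rule antisym)
  show "degree (pcompose (geom_poly n) [:1, 1:]) \<le> n - 1"
    by (rule degree_le) (auto simp: coeff_geom_poly_shift binomial_eq_0)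
  show "n - 1 \<le> degree (pcompose (geom_poly n) [:1, 1:])"
    by (rule le_degree) (use assms in \<open>simp add: coeff_geom_poly_shift\<close>)
qed

lemma degree_geom_poly: "n \<ge> 1 \<Longrightarrow> degree (geom_poly n) = n - 1"
  using degree_geom_poly_shift[of n] by (simp add: degree_pcompose)

lemma content_geom_poly:
  assumes "n \<ge> 1"
  shows "content (geom_poly n) = 1"
proof -
  have "content (geom_poly n) dvd 1"
    using content_dvd_coeff[of "geom_poly n" 0] assms by (simp add: coeff_geom_poly)
  then show ?thesis by (metis is_unit_normalize normalize_content)
qed

lemma poly_geom_poly_root_of_unity:
  fixes z :: "'a::field"
  assumes "z ^ n = 1" "z \<noteq> 1"
  shows "poly (map_poly of_int (geom_poly n)) z = 0"
proof -
  have "map_poly of_int (geom_poly n) = (\<Sum>k<n. monom (1::'a) k)"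
    by (rule poly_eqI) (simp add: coeff_map_poly coeff_geom_poly coeff_sum)
  then show ?thesis using assms by (simp add: poly_sum poly_monom sum_gp_strict)
qed

lemma not_dvd_coeff_mult_first_indices:
  fixes A B :: "'a::idom poly"
  assumes p: "prime_elem p"
    and A: "\<not> p dvd coeff A i" "\<And>k. k < i \<Longrightarrow> p dvd coeff A k"
    and B: "\<not> p dvd coeff B j" "\<And>k. k < j \<Longrightarrow> p dvd coeff B k"
  shows "\<not> p dvd coeff (A * B) (i + j)"
proof -
  have split: "coeff (A * B) (i + j) =
      coeff A i * coeff B j + (\<Sum>k\<in>{..i+j} - {i}. coeff A k * coeff B (i + j - k))"
    by (simp add: coeff_mult sum.remove[of _ i])
  have "p dvd (\<Sum>k\<in>{..i+j} - {i}. coeff A k * coeff B (i + j - k))"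
  proof (rule dvd_sum)
    fix k assume "k \<in> {..i+j} - {i}"
    then consider "k < i" | "i < k" "k \<le> i + j" by force
    then show "p dvd coeff A k * coeff B (i + j - k)"
      by cases (simp_all add: A B)
  qed
  moreover have "\<not> p dvd coeff A i * coeff B j"
    using A B p by (simp add: prime_elem_dvd_mult_iff)
  ultimately show ?thesis unfolding split by (simp add: dvd_add_left_iff)
qed

lemma eisenstein_criterion:
  fixes A B :: "'a::idom poly"
  assumes p: "prime_elem p"
    and lead: "\<not> p dvd lead_coeff (A * B)"
    and coeffs: "\<And>i. i < degree (A * B) \<Longrightarrow> p dvd coeff (A * B) i"
    and const: "\<not> p ^ 2 dvd coeff (A * B) 0"
  shows "degree A = 0 \<or> degree B = 0"
proof (rule ccontr)
  assume nonconst: "\<not> (degree A = 0 \<or> degree B = 0)"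
  have "A \<noteq> 0" "B \<noteq> 0" using lead by auto
  then have deg: "degree (A * B) = degree A + degree B" by (rule degree_mult_eq)
  have lead_A: "\<not> p dvd lead_coeff A" and lead_B: "\<not> p dvd lead_coeff B"
    using lead by (auto simp: lead_coeff_mult)
  obtain i where i: "\<not> p dvd coeff A i" "\<And>k. k < i \<Longrightarrow> p dvd coeff A k"
    using exists_least_iff[of "\<lambda>i. \<not> p dvd coeff A i"] lead_A by blast
  obtain j where j: "\<not> p dvd coeff B j" "\<And>k. k < j \<Longrightarrow> p dvd coeff B k"
    using exists_least_iff[of "\<lambda>j. \<not> p dvd coeff B j"] lead_B by blast
  have "i \<le> degree A" "j \<le> degree B"
    using i(2) j(2) lead_A lead_B not_le by blast+
  moreover have "\<not> p dvd coeff (A * B) (i + j)"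
    using not_dvd_coeff_mult_first_indices[OF p i j] .
  then have "degree (A * B) \<le> i + j" using coeffs not_le by blast
  ultimately have "i = degree A" "j = degree B" using deg by linarith+
  then have "p dvd coeff A 0" "p dvd coeff B 0" using nonconst i(2) j(2) by auto
  then have "p ^ 2 dvd coeff (A * B) 0" by (simp add: coeff_mult_0 power2_eq_square mult_dvd_mono)
  with const show False ..
qed

lemma geom_poly_factors_trivially:
  fixes A B :: "int poly"
  assumes p: "prime p" and e: "\<not> int p dvd e" and AB: "A * B = smult e (geom_poly p)"
  shows "degree A = 0 \<or> degree B = 0"
proof -
  define X where "X = [:1, 1::int:]"
  have p1: "p \<ge> 1" using prime_ge_1_nat[OF p] .
  have AB_shift: "pcompose A X * pcompose B X = smult e (pcompose (geom_poly p) X)"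
    by (simp add: pcompose_mult[symmetric] AB pcompose_smult)
  have "e \<noteq> 0" using e by auto
  then have deg: "degree (pcompose A X * pcompose B X) = p - 1"
    unfolding AB_shift by (simp add: X_def degree_geom_poly_shift[OF p1])
  have coeff: "coeff (pcompose A X * pcompose B X) i = e * int (p choose Suc i)" for i
    unfolding AB_shift by (simp add: X_def coeff_geom_poly_shift)
  have "degree (pcompose A X) = 0 \<or> degree (pcompose B X) = 0"
  proof (rule eisenstein_criterion)
    show "prime_elem (int p)" using p by simp
    show "\<not> int p dvd lead_coeff (pcompose A X * pcompose B X)"
      unfolding deg coeff using e p1 by simp
    show "int p dvd coeff (pcompose A X * pcompose B X) i"
      if "i < degree (pcompose A X * pcompose B X)" for i
    proof -
      have "p dvd p choose Suc i" using that p by (simp add: deg dvd_choose_prime)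
      then show ?thesis by (simp add: coeff)
    qed
    have "\<not> int p * int p dvd e * int p" using e p1 by simp
    then show "\<not> int p ^ 2 dvd coeff (pcompose A X * pcompose B X) 0"
      by (simp add: coeff power2_eq_square)
  qed
  then show ?thesis by (simp add: X_def degree_pcompose)
qed

section \<open>Vanishing integer combinations of roots of unity\<close>

lemma map_poly_of_int_add:
  "map_poly (of_int :: int \<Rightarrow> 'a::comm_ring_1) (P + Q) = map_poly of_int P + map_poly of_int Q"
  by (rule poly_eqI) (simp add: coeff_map_poly)

lemma map_poly_of_int_mult:
  "map_poly (of_int :: int \<Rightarrow> 'a::comm_ring_1) (P * Q) = map_poly of_int P * map_poly of_int Q"
  by (rule poly_eqI) (simp add: coeff_map_poly coeff_mult)

lemma map_poly_of_int_smult: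
  "map_poly (of_int :: int \<Rightarrow> 'a::comm_ring_1) (smult c P) = smult (of_int c) (map_poly of_int P)"
  by (rule poly_eqI) (simp add: coeff_map_poly)

lemma min_degree_root_poly_dvd_multiple:
  fixes M F :: "int poly" and z :: "'a::comm_ring_1"
  assumes M: "M \<noteq> 0" "poly (map_poly of_int M) z = 0"
    and min: "\<And>N. N \<noteq> 0 \<Longrightarrow> poly (map_poly of_int N) z = 0 \<Longrightarrow> degree M \<le> degree N"
    and F: "poly (map_poly of_int F) z = 0"
  obtains c Q where "c \<noteq> 0" "M * Q = smult c F"
proof -
  obtain Q r where qr: "pseudo_divmod F M = (Q, r)" by (metis surj_pair)
  define c where "c = lead_coeff M ^ (Suc (degree F) - degree M)"
  have div: "smult c F = M * Q + r" unfolding c_def by (rule pseudo_divmod(1)[OF M(1) qr])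
  have "poly (map_poly of_int r) z = 0"
    using arg_cong[OF div, of "\<lambda>P. poly (map_poly of_int P) z"] M(2) F
    by (simp add: map_poly_of_int_add map_poly_of_int_mult map_poly_of_int_smult)
  then have "r = 0" using pseudo_divmod(2)[OF M(1) qr] min not_le by blast
  moreover have "c \<noteq> 0" using M(1) by (simp add: c_def)
  ultimately show thesis using that[of c Q] div by auto
qed

lemma root_of_unity_not_root_of_low_degree:
  fixes z :: "'a::field_char_0"
  assumes p: "prime p" and z: "z ^ p = 1" "z \<noteq> 1"
    and P: "P \<noteq> 0" "degree P < p - 1"
  shows "poly (map_poly of_int P) z \<noteq> 0"
  \<comment> \<open>A root polynomial M of least degree divides a multiple of the cyclotomic polynomial;
    by Gauss's lemma and Eisenstein the cofactor is constant, so M has degree p - 1.\<close>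
proof
  assume P_root: "poly (map_poly of_int P) z = 0"
  then obtain M where M: "M \<noteq> 0" "poly (map_poly of_int M) z = 0"
    and min: "\<And>N. N \<noteq> 0 \<Longrightarrow> poly (map_poly of_int N) z = 0 \<Longrightarrow> degree M \<le> degree N"
    using ex_has_least_nat[of "\<lambda>M. M \<noteq> 0 \<and> poly (map_poly of_int M) z = 0" P degree] P(1)
    by blast
  obtain c Q where c: "c \<noteq> 0" and MQ: "M * Q = smult c (geom_poly p)"
    using min_degree_root_poly_dvd_multiple[OF M min poly_geom_poly_root_of_unity[OF z]] by blast
  have p1: "p \<ge> 1" using prime_ge_1_nat[OF p] .
  have gauss: "primitive_part M * primitive_part Q = smult (sgn c) (geom_poly p)"
    using arg_cong[OF MQ, of primitive_part]
    by (simp add: primitive_part_mult primitive_part_smult primitive_part_prim content_geom_poly[OF p1])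
  have "\<not> int p dvd sgn c"
    using c p by (auto simp: sgn_if prime_gt_1_nat)
  from geom_poly_factors_trivially[OF p this gauss]
  have "degree M = 0 \<or> degree Q = 0" by simp
  moreover have "degree M \<noteq> 0"
  proof
    assume "degree M = 0"
    then obtain a where "M = [:a:]" by (rule degree_eq_zeroE)
    then show False using M by (simp add: map_poly_pCons)
  qed
  moreover have "degree M + degree Q = p - 1"
  proof -
    have "geom_poly p \<noteq> 0" using content_geom_poly[OF p1] by auto
    then have "Q \<noteq> 0" using MQ c by auto
    then have "degree (M * Q) = degree M + degree Q" by (rule degree_mult_eq[OF M(1)])
    then show ?thesis using MQ c degree_geom_poly[OF p1] by simp
  qed
  ultimately show False using min[OF P(1) P_root] P(2) by auto
qed

lemma int_combination_root_of_unity_eq_0_imp_coeffs_eq: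
  fixes z :: "'a::field_char_0" and c :: "nat \<Rightarrow> int"
  assumes p: "prime p" and z: "z ^ p = 1" "z \<noteq> 1"
    and comb: "(\<Sum>k<p. of_int (c k) * z ^ k) = 0" and k: "k < p"
  shows "c k = c (p - 1)"
proof -
  define P where "P = (\<Sum>i<p - 1. monom (c i - c (p - 1)) i)"
  have coeff_P: "coeff P i = (if i < p - 1 then c i - c (p - 1) else 0)" for i
    by (simp add: P_def coeff_sum)
  have p_eq: "p = Suc (p - 1)" using prime_gt_0_nat[OF p] by simp
  have "map_poly of_int P = (\<Sum>i<p - 1. monom (of_int (c i - c (p - 1)) :: 'a) i)"
    by (rule poly_eqI) (simp add: coeff_map_poly coeff_P coeff_sum)
  then have "poly (map_poly of_int P) z = (\<Sum>i<p - 1. of_int (c i - c (p - 1)) * z ^ i)"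
    by (simp add: poly_sum poly_monom)
  also have "\<dots> = (\<Sum>i<p. of_int (c i - c (p - 1)) * z ^ i)"
    by (subst (2) p_eq, subst sum.lessThan_Suc) simp
  also have "\<dots> = (\<Sum>i<p. of_int (c i) * z ^ i) - of_int (c (p - 1)) * (\<Sum>i<p. z ^ i)"
    by (simp add: algebra_simps sum_subtractf sum_distrib_left sum_distrib_right)
  also have "\<dots> = 0" using comb z by (simp add: sum_gp_strict)
  finally have P_root: "poly (map_poly of_int P) z = 0" .
  have "degree P \<le> p - 2" by (rule degree_le) (auto simp: coeff_P)
  then have "degree P < p - 1" using prime_ge_2_nat[OF p] by linarith
  then have "P = 0" using root_of_unity_not_root_of_low_degree[OF p z] P_root by blast
  moreover have "k < p - 1 \<or> k = p - 1" using k by linarith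
  ultimately show ?thesis using coeff_P[of k] by auto
qed

section \<open>Equidistribution from vanishing character sums\<close>

definition unit_root :: "nat \<Rightarrow> complex" where
  "unit_root r = exp (2 * pi * \<i> / of_nat r)"

lemma unit_root_pow_eq_1: "r > 0 \<Longrightarrow> unit_root r ^ r = 1"
  using complex_root_unity[of r 1] by (simp add: unit_root_def)

lemma unit_root_neq_1: "r \<ge> 2 \<Longrightarrow> unit_root r \<noteq> 1"
  using complex_root_unity_eq_1[of r 1] by (simp add: unit_root_def)

lemma exp_2pi_i_div_eq_unit_root_pow:
  assumes "r > 0"
  shows "exp (2 * pi * \<i> * complex_of_real (real_of_int x / real r)) = unit_root r ^ nat (x mod int r)"
proof -
  define m where "m = nat (x mod int r)"
  define d where "d = x div int r"
  have x: "x = int r * d + int m" using assms by (simp add: m_def d_def)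
  have "2 * pi * \<i> * complex_of_real (real_of_int x / real r)
        = (2 * of_int d * pi) * \<i> + of_nat m * (2 * pi * \<i> / of_nat r)"
    using assms by (simp add: x field_simps)
  then have "exp (2 * pi * \<i> * complex_of_real (real_of_int x / real r))
        = exp ((2 * of_int d * pi) * \<i>) * exp (of_nat m * (2 * pi * \<i> / of_nat r))"
    by (simp add: exp_add)
  also have "exp ((2 * of_int d * pi) * \<i>) = 1" by (rule exp_integer_2pi) simp
  also have "exp (of_nat m * (2 * pi * \<i> / of_nat r)) = unit_root r ^ m"
    unfolding unit_root_def by (rule exp_of_nat_mult)
  finally show ?thesis by (simp add: m_def)
qed

definition equidistributed_mod :: "nat \<Rightarrow> ('a \<Rightarrow> int) \<Rightarrow> 'a set \<Rightarrow> bool" where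
  "equidistributed_mod r g T \<longleftrightarrow> (\<forall>k. r * card {s\<in>T. g s mod int r = k mod int r} = card T)"

lemma equidistributed_mod_if_exp_sum_eq_0:
  fixes g :: "'a \<Rightarrow> int"
  assumes r: "prime r" and T: "finite T"
    and sum: "(\<Sum>s\<in>T. exp (2 * pi * \<i> * complex_of_real (real_of_int (g s) / real r))) = 0"
  shows "equidistributed_mod r g T"
proof -
  have r0: "r > 0" using prime_gt_0_nat[OF r] .
  define h where "h s = nat (g s mod int r)" for s
  define N where "N k = int (card {s\<in>T. h s = k})" for k
  have h_less: "h s < r" for s unfolding h_def using r0 by (simp add: nat_less_iff)
  have "(\<Sum>k<r. of_int (N k) * unit_root r ^ k) = (\<Sum>k<r. \<Sum>s\<in>{s\<in>T. h s = k}. unit_root r ^ h s)"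
    by (simp add: N_def)
  also have "\<dots> = (\<Sum>s\<in>T. unit_root r ^ h s)"
    by (rule sum.group) (use T h_less in auto)
  also have "\<dots> = (\<Sum>s\<in>T. exp (2 * pi * \<i> * complex_of_real (real_of_int (g s) / real r)))"
    unfolding h_def by (intro sum.cong refl exp_2pi_i_div_eq_unit_root_pow[symmetric, OF r0])
  finally have comb: "(\<Sum>k<r. of_int (N k) * unit_root r ^ k) = 0" using sum by simp
  have N_const: "N k = N (r - 1)" if "k < r" for k
    by (rule int_combination_root_of_unity_eq_0_imp_coeffs_eq[OF r unit_root_pow_eq_1[OF r0]
        unit_root_neq_1[OF prime_ge_2_nat[OF r]] comb that])
  have "h ` T \<subseteq> {..<r}" using h_less by auto
  from sum.group[OF T finite_lessThan this, of "\<lambda>_. 1::nat"]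
  have "card T = (\<Sum>k<r. card {s\<in>T. h s = k})" by simp
  then have "int (card T) = (\<Sum>k<r. N k)" by (simp add: N_def)
  also have "\<dots> = (\<Sum>k<r. N (r - 1))" by (intro sum.cong refl N_const) simp
  also have "\<dots> = int r * N (r - 1)" by simp
  finally have card_T: "int (card T) = int r * N (r - 1)" .
  show ?thesis unfolding equidistributed_mod_def
  proof
    fix k
    have "{s\<in>T. g s mod int r = k mod int r} = {s\<in>T. h s = nat (k mod int r)}"
      using r0 by (auto simp: h_def nat_eq_iff2)
    moreover have "nat (k mod int r) < r" using r0 by (simp add: nat_less_iff)
    ultimately have "int (card {s\<in>T. g s mod int r = k mod int r}) = N (r - 1)"
      using N_const[of "nat (k mod int r)"] by (simp add: N_def)
    with card_T have "int (r * card {s\<in>T. g s mod int r = k mod int r}) = int (card T)"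
      by simp
    then show "r * card {s\<in>T. g s mod int r = k mod int r} = card T"
      by (simp only: of_nat_eq_iff)
  qed
qed

lemma equidistributed_mod_cong:
  assumes "equidistributed_mod r g T" "\<And>s. s \<in> T \<Longrightarrow> g s mod int r = g' s mod int r"
  shows "equidistributed_mod r g' T"
proof -
  have "{s\<in>T. g s mod int r = k mod int r} = {s\<in>T. g' s mod int r = k mod int r}" for k
    using assms(2) by auto
  then show ?thesis using assms(1) by (simp add: equidistributed_mod_def)
qed

lemma equidistributed_mod_cmult:
  assumes r: "prime r" and c: "\<not> int r dvd c"
    and eq: "equidistributed_mod r (\<lambda>s. c * g s) T"
  shows "equidistributed_mod r g T"
proof -
  have classes: "{s\<in>T. (c * g s) mod int r = (c * k) mod int r} = {s\<in>T. g s mod int r = k mod int r}"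
    for k
  proof -
    have "(c * g s) mod int r = (c * k) mod int r \<longleftrightarrow> g s mod int r = k mod int r" for s
    proof -
      have "(c * g s) mod int r = (c * k) mod int r \<longleftrightarrow> int r dvd c * (g s - k)"
        by (simp add: mod_eq_dvd_iff algebra_simps)
      also have "\<dots> \<longleftrightarrow> int r dvd g s - k" using r c by (simp add: prime_dvd_mult_iff)
      finally show ?thesis by (simp add: mod_eq_dvd_iff)
    qed
    then show ?thesis by auto
  qed
  show ?thesis unfolding equidistributed_mod_def
  proof
    fix k
    have "r * card {s\<in>T. (c * g s) mod int r = (c * k) mod int r} = card T"
      using eq unfolding equidistributed_mod_def by blast
    then show "r * card {s\<in>T. g s mod int r = k mod int r} = card T" using classes by simp
  qed
qed

lemma card_roots_affine_mod:
  fixes a b :: int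
  assumes r: "prime r"
  shows "card {t\<in>{0..<int r}. (a + t * b) mod int r = 0}
         = (if b mod int r \<noteq> 0 then 1 else if a mod int r = 0 then r else 0)"
proof (cases "b mod int r = 0")
  case True
  then have "(a + t * b) mod int r = a mod int r" for t
    by (metis add_cancel_right_right mod_add_right_eq mod_mult_right_eq mult_zero_right)
  then have "{t\<in>{0..<int r}. (a + t * b) mod int r = 0}
      = (if a mod int r = 0 then {0..<int r} else {})"
    by auto
  then show ?thesis using True by simp
next
  case False
  define f where "f t = (a + t * b) mod int r" for t
  have r0: "int r > 0" using prime_gt_0_nat[OF r] by simp
  have "inj_on f {0..<int r}"
  proof
    fix t t' assume t: "t \<in> {0..<int r}" "t' \<in> {0..<int r}" and "f t = f t'"
    then have "int r dvd (t - t') * b" by (simp add: f_def mod_eq_dvd_iff algebra_simps)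
    moreover have "\<not> int r dvd b" using False by (simp add: dvd_eq_mod_eq_0)
    ultimately have "int r dvd t - t'" using r by (simp add: prime_dvd_mult_iff)
    then have "t mod int r = t' mod int r" by (simp add: mod_eq_dvd_iff)
    then show "t = t'" using t by simp
  qed
  moreover have "f ` {0..<int r} \<subseteq> {0..<int r}" using r0 by (auto simp: f_def)
  ultimately have bij: "f ` {0..<int r} = {0..<int r}" by (simp add: endo_inj_surj)
  moreover have "0 \<in> {0..<int r}" using r0 by simp
  ultimately obtain t0 where t0: "t0 \<in> {0..<int r}" "f t0 = 0" by (metis imageE)
  have "{t\<in>{0..<int r}. f t = 0} = {t0}"
    using t0 \<open>inj_on f {0..<int r}\<close> by (auto simp: inj_on_def)
  then show ?thesis using False by (simp add: f_def)
qed

lemma card_filter_sum: "finite A \<Longrightarrow> card {x\<in>A. P x} = (\<Sum>x\<in>A. if P x then 1 else 0)"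
  by (simp add: sum.inter_filter[symmetric])

lemma prime_sq_dvd_card_if_equidistributed_directions:
  fixes h1 h2 :: "'a \<Rightarrow> int"
  assumes r: "prime r" and T: "finite T"
    and eq2: "equidistributed_mod r h2 T"
    and eq1: "\<And>t. 0 \<le> t \<Longrightarrow> t < int r \<Longrightarrow> equidistributed_mod r (\<lambda>s. h1 s + t * h2 s) T"
  shows "r ^ 2 dvd card T"
proof -
  define A where "A = card {s\<in>T. h2 s mod int r = 0}"
  define B where "B = card {s\<in>T. h1 s mod int r = 0 \<and> h2 s mod int r = 0}"
  define C where "C = card {s\<in>T. h2 s mod int r \<noteq> 0}"
  have rA: "r * A = card T"
    using eq2 unfolding equidistributed_mod_def A_def by (metis mod_0)
  have AC: "A + C = card T"
    unfolding A_def C_def using T by (subst card_Un_disjoint[symmetric]) (auto intro: arg_cong[where f=card])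
  \<comment> \<open>Double counting the pairs (s, t) with h1 s + t h2 s \<equiv> 0 (mod r) gives r A = C + r B.\<close>
  have "card {s\<in>T. (h1 s + t * h2 s) mod int r = 0} = A" if "t \<in> {0..<int r}" for t
  proof -
    have "equidistributed_mod r (\<lambda>s. h1 s + t * h2 s) T" using eq1 that by simp
    then have "\<forall>k. r * card {s\<in>T. (h1 s + t * h2 s) mod int r = k mod int r} = card T"
      unfolding equidistributed_mod_def .
    then have "r * card {s\<in>T. (h1 s + t * h2 s) mod int r = 0 mod int r} = card T" by blast
    then have "r * card {s\<in>T. (h1 s + t * h2 s) mod int r = 0} = r * A" using rA by simp
    then show ?thesis using prime_gt_0_nat[OF r] by simp
  qed
  then have "r * A = (\<Sum>t\<in>{0..<int r}. card {s\<in>T. (h1 s + t * h2 s) mod int r = 0})"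
    by simp
  also have "\<dots> = (\<Sum>t\<in>{0..<int r}. \<Sum>s\<in>T. if (h1 s + t * h2 s) mod int r = 0 then 1 else 0)"
    using T by (simp add: card_filter_sum)
  also have "\<dots> = (\<Sum>s\<in>T. \<Sum>t\<in>{0..<int r}. if (h1 s + t * h2 s) mod int r = 0 then 1 else 0)"
    by (rule sum.swap)
  also have "\<dots> = (\<Sum>s\<in>T. card {t\<in>{0..<int r}. (h1 s + t * h2 s) mod int r = 0})"
    by (simp only: card_filter_sum finite_atLeastLessThan_int)
  also have "\<dots> = (\<Sum>s\<in>T. (if h2 s mod int r \<noteq> 0 then 1 else 0)
                       + r * (if h1 s mod int r = 0 \<and> h2 s mod int r = 0 then 1 else 0))"
    by (intro sum.cong refl) (subst card_roots_affine_mod[OF r], simp)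
  also have "\<dots> = C + r * B"
    using T by (simp add: C_def B_def sum.distrib sum_distrib_left card_filter_sum)
  finally have "r * A = C + r * B" .
  then have "A = r * B" using rA AC by linarith
  then have "card T = r ^ 2 * B" using rA by (simp add: power2_eq_square)
  then show ?thesis by simp
qed

section \<open>Spectral subsets of Z_p^2 \<times> Z_q^2\<close>

lemma finite_Gset: "finite (Gset p q)"
proof -
  have "Gset p q \<subseteq> ({0..<int p} \<times> {0..<int p}) \<times> ({0..<int q} \<times> {0..<int q})"
    by (auto simp: Gset_def)
  then show ?thesis by (rule finite_subset) auto
qed

lemma chi_first_factor:
  "chi p q ((u1, u2), (0, 0)) s =
     exp (2 * pi * \<i> * complex_of_real (real_of_int (u1 * fst (fst s) + u2 * snd (fst s)) / real p))"
  by (cases s) (auto simp: chi_def)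

text \<open>One representative of each of the p + 1 lines through the origin of Z_p^2.\<close>

definition directions :: "nat \<Rightarrow> (int \<times> int) set" where
  "directions p = insert (0, 1) {(1, t) | t. 0 \<le> t \<and> t < int p}"

lemma equidistributed_if_chiS_eq_0:
  assumes p: "prime p" and S: "finite S" and c: "1 \<le> c" "c < int p"
    and vanish: "chiS p q (((c * e1) mod int p, (c * e2) mod int p), (0, 0)) S = 0"
  shows "equidistributed_mod p (\<lambda>s. e1 * fst (fst s) + e2 * snd (fst s)) S"
proof (rule equidistributed_mod_cmult[OF p])
  show "\<not> int p dvd c" using c zdvd_imp_le by fastforce
  define G where "G s = ((c * e1) mod int p) * fst (fst s) + ((c * e2) mod int p) * snd (fst s)"
    for s :: elt
  have "equidistributed_mod p G S"
  proof (rule equidistributed_mod_if_exp_sum_eq_0[OF p S])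
    show "(\<Sum>s\<in>S. exp (2 * pi * \<i> * complex_of_real (real_of_int (G s) / real p))) = 0"
      using vanish unfolding chiS_def G_def chi_first_factor .
  qed
  moreover have "G s mod int p = (c * (e1 * fst (fst s) + e2 * snd (fst s))) mod int p" for s
  proof -
    have "G s mod int p = ((c * e1) mod int p * fst (fst s) mod int p
                          + (c * e2) mod int p * snd (fst s) mod int p) mod int p"
      unfolding G_def by (rule mod_add_eq[symmetric])
    also have "\<dots> = ((c * e1) * fst (fst s) mod int p + (c * e2) * snd (fst s) mod int p) mod int p"
      by (simp only: mod_mult_left_eq)
    also have "\<dots> = (c * (e1 * fst (fst s) + e2 * snd (fst s))) mod int p"
      by (simp add: mod_add_eq algebra_simps)
    finally show ?thesis .
  qed
  ultimately show "equidistributed_mod p (\<lambda>s. c * (e1 * fst (fst s) + e2 * snd (fst s))) S"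
    by (rule equidistributed_mod_cong)
qed

lemma exists_direction_chiS_neq_0:
  assumes p: "prime p" and S: "finite S" and nd: "\<not> p ^ 2 dvd card S"
  obtains e1 e2 where "(e1, e2) \<in> directions p"
    and "\<And>c. 1 \<le> c \<Longrightarrow> c < int p \<Longrightarrow> chiS p q (((c * e1) mod int p, (c * e2) mod int p), (0, 0)) S \<noteq> 0"
proof -
  have "\<exists>(e1, e2)\<in>directions p. \<forall>c. 1 \<le> c \<and> c < int p \<longrightarrow>
          chiS p q (((c * e1) mod int p, (c * e2) mod int p), (0, 0)) S \<noteq> 0"
  proof (rule ccontr)
    assume "\<not> ?thesis"
    then have equi: "equidistributed_mod p (\<lambda>s. e1 * fst (fst s) + e2 * snd (fst s)) S"
      if "(e1, e2) \<in> directions p" for e1 e2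
      using that equidistributed_if_chiS_eq_0[OF p S] by blast
    have "p ^ 2 dvd card S"
    proof (rule prime_sq_dvd_card_if_equidistributed_directions[OF p S])
      show "equidistributed_mod p (\<lambda>s. snd (fst s)) S"
        using equi[of 0 1] by (simp add: directions_def)
      show "equidistributed_mod p (\<lambda>s. fst (fst s) + t * snd (fst s)) S"
        if "0 \<le> t" "t < int p" for t
        using equi[of 1 t] that by (simp add: directions_def)
    qed
    with nd show False ..
  qed
  then show thesis using that by blast
qed

lemma diff_eq_multiple_of_direction:
  fixes y1 y2 :: int
  assumes p: "prime p" and e: "(e1, e2) \<in> directions p"
    and nonzero: "\<not> (int p dvd y1 \<and> int p dvd y2)" and parallel: "int p dvd e1 * y2 - e2 * y1"
  obtains c where "1 \<le> c" "c < int p"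
    "(c * e1) mod int p = y1 mod int p" "(c * e2) mod int p = y2 mod int p"
proof -
  have p0: "int p > 0" using prime_gt_0_nat[OF p] by simp
  have residue: "1 \<le> y mod int p" "y mod int p < int p" if "\<not> int p dvd y" for y
  proof -
    have "y mod int p \<noteq> 0" using that by (simp add: dvd_eq_mod_eq_0)
    moreover have "0 \<le> y mod int p" using p0 by simp
    ultimately show "1 \<le> y mod int p" by linarith
    show "y mod int p < int p" using p0 by simp
  qed
  consider "e1 = 0" "e2 = 1" | t where "e1 = 1" "e2 = t" using e by (auto simp: directions_def)
  then show thesis
  proof cases
    case 1
    then have "int p dvd y1" using parallel by simp
    then have "\<not> int p dvd y2" using nonzero by blast
    then show thesis
      using that[of "y2 mod int p"] residue[of y2] 1 \<open>int p dvd y1\<close> by (simp add: dvd_eq_mod_eq_0)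
  next
    case 2
    have "\<not> int p dvd y1"
    proof
      assume "int p dvd y1"
      then have "int p dvd (y2 - t * y1) + t * y1" using parallel 2 by (intro dvd_add) simp_all
      then show False using nonzero \<open>int p dvd y1\<close> by simp
    qed
    moreover have "(y1 * t) mod int p = y2 mod int p"
      using parallel 2 by (simp add: mod_eq_dvd_iff dvd_diff_commute mult.commute)
    then have "(y1 mod int p * e2) mod int p = y2 mod int p" using 2 by (simp add: mod_mult_left_eq)
    ultimately show thesis using that[of "y1 mod int p"] residue[of y1] 2 by simp
  qed
qed

lemma eq_if_dvd_diff_in_range:
  fixes x y m :: int
  assumes "0 \<le> x" "x < m" "0 \<le> y" "y < m" "m dvd x - y"
  shows "x = y"
proof -
  have "x mod m = y mod m" using assms(5) by (simp add: mod_eq_dvd_iff)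
  then show ?thesis using assms(1-4) by simp
qed

text \<open>The map records the class of l modulo the line spanned by (e, 0).\<close>

lemma inj_on_spectrum_mod_direction:
  assumes p: "prime p" and e: "(e1, e2) \<in> directions p"
    and nonvanish: "\<And>c. 1 \<le> c \<Longrightarrow> c < int p \<Longrightarrow>
                     chiS p q (((c * e1) mod int p, (c * e2) mod int p), (0, 0)) S \<noteq> 0"
    and L: "\<Lambda> \<subseteq> Gset p q"
    and orth: "\<And>l l'. l \<in> \<Lambda> \<Longrightarrow> l' \<in> \<Lambda> \<Longrightarrow> l \<noteq> l' \<Longrightarrow> chiS p q (gsub p q l l') S = 0"
  shows "inj_on (\<lambda>l. ((e1 * snd (fst l) - e2 * fst (fst l)) mod int p, snd l)) \<Lambda>"
proof (rule inj_onI, rule ccontr)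
  fix l l' assume l: "l \<in> \<Lambda>" "l' \<in> \<Lambda>" and ne: "l \<noteq> l'"
    and same_class: "((e1 * snd (fst l) - e2 * fst (fst l)) mod int p, snd l)
                   = ((e1 * snd (fst l') - e2 * fst (fst l')) mod int p, snd l')"
  obtain a1 a2 b1 b2 where l_eq: "l = ((a1, a2), (b1, b2))" by (metis prod.collapse)
  obtain a1' a2' b1' b2' where l'_eq: "l' = ((a1', a2'), (b1', b2'))" by (metis prod.collapse)
  have range: "0 \<le> a1" "a1 < int p" "0 \<le> a2" "a2 < int p"
    "0 \<le> a1'" "a1' < int p" "0 \<le> a2'" "a2' < int p"
    using L l by (auto simp: Gset_def l_eq l'_eq)
  have b: "b1' = b1" "b2' = b2" using same_class by (simp_all add: l_eq l'_eq)
  have "\<not> (int p dvd a1 - a1' \<and> int p dvd a2 - a2')"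
    using ne range eq_if_dvd_diff_in_range by (auto simp: l_eq l'_eq b)
  moreover have "int p dvd e1 * (a2 - a2') - e2 * (a1 - a1')"
    using same_class by (simp add: l_eq l'_eq mod_eq_dvd_iff algebra_simps)
  ultimately obtain c where c: "1 \<le> c" "c < int p"
    "(c * e1) mod int p = (a1 - a1') mod int p" "(c * e2) mod int p = (a2 - a2') mod int p"
    using diff_eq_multiple_of_direction[OF p e] by blast
  have "gsub p q l l' = (((c * e1) mod int p, (c * e2) mod int p), (0, 0))"
    by (simp add: gsub_def l_eq l'_eq b c)
  then show False using orth[OF l ne] nonvanish[OF c(1,2)] by simp
qed

lemma card_spectrum_le:
  assumes p: "prime p" and S: "finite S" and nd: "\<not> p ^ 2 dvd card S"
    and L: "\<Lambda> \<subseteq> Gset p q"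
    and orth: "\<And>l l'. l \<in> \<Lambda> \<Longrightarrow> l' \<in> \<Lambda> \<Longrightarrow> l \<noteq> l' \<Longrightarrow> chiS p q (gsub p q l l') S = 0"
  shows "card \<Lambda> \<le> p * q ^ 2"
proof -
  obtain e1 e2 where e: "(e1, e2) \<in> directions p"
    and nonvanish: "\<And>c. 1 \<le> c \<Longrightarrow> c < int p \<Longrightarrow>
                     chiS p q (((c * e1) mod int p, (c * e2) mod int p), (0, 0)) S \<noteq> 0"
    using exists_direction_chiS_neq_0[OF p S nd] by blast
  define F where "F l = ((e1 * snd (fst l) - e2 * fst (fst l)) mod int p, snd l)" for l :: elt
  have inj: "inj_on F \<Lambda>"
    unfolding F_def by (rule inj_on_spectrum_mod_direction[OF p e nonvanish L orth])
  have range: "F ` \<Lambda> \<subseteq> {0..<int p} \<times> ({0..<int q} \<times> {0..<int q})"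
    using L prime_gt_0_nat[OF p] by (auto simp: F_def Gset_def)
  have "card \<Lambda> = card (F ` \<Lambda>)" using inj by (rule card_image[symmetric])
  also have "\<dots> \<le> card ({0..<int p} \<times> ({0..<int q} \<times> {0..<int q}))"
    using range by (rule card_mono[rotated]) simp
  also have "\<dots> = p * q ^ 2" by (simp add: card_cartesian_product power2_eq_square)
  finally show ?thesis .
qed

lemma card_le_if_spectral:
  assumes p: "prime p" and S: "S \<subseteq> Gset p q" and nd: "\<not> p ^ 2 dvd card S"
    and spectral: "spectral p q S"
  shows "card S \<le> p * q ^ 2"
proof -
  obtain \<Lambda> where L: "\<Lambda> \<subseteq> Gset p q" and card: "card \<Lambda> = card S"
    and orth: "\<And>l l'. l \<in> \<Lambda> \<Longrightarrow> l' \<in> \<Lambda> \<Longrightarrow> l \<noteq> l' \<Longrightarrow> chiS p q (gsub p q l l') S = 0"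
    using spectral unfolding spectral_def by blast
  have "finite S" using S finite_Gset finite_subset by blast
  from card_spectrum_le[OF p this nd L orth] show ?thesis by (simp add: card)
qed

lemma chi_swap: "chi q p (prod.swap w) (prod.swap s) = chi p q w s"
  by (cases w, cases s) (auto simp: chi_def add.commute)

lemma gsub_swap: "gsub q p (prod.swap l) (prod.swap l') = prod.swap (gsub p q l l')"
  by (cases l, cases l') (auto simp: gsub_def)

lemma swap_in_Gset_iff: "prod.swap l \<in> Gset q p \<longleftrightarrow> l \<in> Gset p q"
  by (cases l) (auto simp: Gset_def)

lemma chiS_swap: "chiS q p (prod.swap w) (prod.swap ` S) = chiS p q w S"
  by (simp add: chiS_def sum.reindex chi_swap)

lemma spectral_swap:
  assumes "spectral p q S"
  shows "spectral q p (prod.swap ` S)"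
proof -
  obtain \<Lambda> where L: "\<Lambda> \<subseteq> Gset p q" and card: "card \<Lambda> = card S"
    and orth: "\<forall>l\<in>\<Lambda>. \<forall>l'\<in>\<Lambda>. l \<noteq> l' \<longrightarrow> chiS p q (gsub p q l l') S = 0"
    using assms unfolding spectral_def by blast
  show ?thesis unfolding spectral_def
  proof (intro exI conjI ballI impI)
    show "prod.swap ` \<Lambda> \<subseteq> Gset q p" using L swap_in_Gset_iff by blast
    show "card (prod.swap ` \<Lambda>) = card (prod.swap ` S)" using card by (simp add: card_image)
  next
    fix l l' assume "l \<in> prod.swap ` \<Lambda>" "l' \<in> prod.swap ` \<Lambda>" "l \<noteq> l'"
    then obtain m m' where "m \<in> \<Lambda>" "m' \<in> \<Lambda>" "m \<noteq> m'" "l = prod.swap m" "l' = prod.swap m'"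
      by auto
    then show "chiS q p (gsub q p l l') (prod.swap ` S) = 0"
      using orth by (simp add: gsub_swap chiS_swap)
  qed
qed

lemma prime_sq_not_dvd_if_gcd:
  fixes p q n :: nat
  assumes p: "prime p" and q: "prime q" and "p \<noteq> q"
    and gcd: "gcd n (p ^ 2 * q ^ 2) = p * q"
  shows "\<not> p ^ 2 dvd n"
proof
  assume "p ^ 2 dvd n"
  then have "p ^ 2 dvd p * q" by (metis gcd gcd_greatest dvd_triv_left)
  then have "p dvd q" using prime_gt_0_nat[OF p] by (simp add: power2_eq_square)
  then show False using p q \<open>p \<noteq> q\<close> primes_dvd_imp_eq by blast
qed

theorem lemma4p4:
  fixes p q :: nat and S :: "elt set"
  assumes "prime p" and "prime q" and "p \<noteq> q"
    and "S \<subseteq> Gset p q"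
    and "gcd (card S) (p^2 * q^2) = p * q"
    and "card S \<ge> p * q * min p q"
  shows "\<not> spectral p q S"
proof
  assume spectral: "spectral p q S"
  have nd_p: "\<not> p ^ 2 dvd card S"
    using prime_sq_not_dvd_if_gcd assms(1-3,5) by blast
  have nd_q: "\<not> q ^ 2 dvd card S"
    using prime_sq_not_dvd_if_gcd[of q p] assms(1-3,5) by (simp add: mult.commute)
  have card_swap: "card (prod.swap ` S) = card S" by (simp add: card_image)
  have swap_S: "prod.swap ` S \<subseteq> Gset q p" using assms(4) swap_in_Gset_iff by blast
  have "card S \<le> p * q ^ 2"
    using card_le_if_spectral assms(1,4) nd_p spectral by blast
  moreover have "card S \<le> q * p ^ 2"
    using card_le_if_spectral[OF assms(2) swap_S _ spectral_swap[OF spectral]] nd_q card_swap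
    by simp
  ultimately have "card S = p ^ 2 * q \<or> card S = q ^ 2 * p"
    using assms(6) by (cases "p \<le> q") (auto simp: min_def power2_eq_square mult_ac)
  then show False using nd_p nd_q by auto
qed

end
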